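(* Let $N\ge1$, $0\le R_+\le N$, and let $u(\vec k),v(\vec k)$ be complex $R_+\times N$ matrices (defined for all $\vec k$ in the Brillouin zone) satisfying $$u(\vec k)u^\dagger(\vec k)-v(\vec k)v^\dagger(\vec k)=\mathbb{1}_{R_+},\qquad u(\vec k)v^T(-\vec k)-v(\vec k)u^T(-\vec k)=0.$$ Consider the bosonic Hamiltonian $H=\sum_{\vec k}\sum_{m=1}^{R_+}A^\dagger_{m,\vec k}A_{m,\vec k}$ with $A_{m,\vec k}=\sum_{n=1}^N(u_{mn}(\vec k)b_{n,\vec k}+v_{mn}(\vec k)b^\dagger_{n,-\vec k})$, and write it (up to an additive constant) as $H=\frac12\sum_{\vec k}\phi_{\vec k}^\dagger h(\vec k)\phi_{\vec k}$ with Hermitian BdG matrix $h(\vec k)$. Let $Q(\vec k)=u^\dagger(\vec k)u(\vec k)$ and let $\tilde h(\vec k)=\mathrm{diag}\big(Q(\vec k),\,Q(-\vec k)^T\big)$ be the BdG matrix of the number-conserving Hamiltonian $\tilde H=\sum_{\vec k}\sum_{m,n}Q_{mn}(\vec k)b^\dagger_{m,\vec k}b_{n,\vec k}$. Then for every $\vec k$, $$\tilde h=\tfrac14\big(h+\tau_z h\tau_z+\tau_z h\tau_z h+h\tau_z h\tau_z\big),$$ where $h=h(\vec k)$ and $\tilde h=\tilde h(\vec k)$.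
   Context: $b_{n,\vec k}$ ($n=1,\dots,N$) are bosonic annihilation operators on sublattice $n$ at momentum $\vec k$ of a lattice with $N$ sites per unit cell and periodic boundary conditions. The Nambu vector is $\phi_{\vec k}=(b_{1,\vec k},\dots,b_{N,\vec k},b^\dagger_{1,-\vec k},\dots,b^\dagger_{N,-\vec k})^T$ and $\tau_z=\mathrm{diag}(\mathbb{1}_N,-\mathbb{1}_N)$. This is the positive-definite (band-flattened) case, in which all modes above the gap are particle-like. *)

theory Defs
  imports Complex_Main "Jordan_Normal_Form.Matrix"
begin

definition adj :: "complex mat \<Rightarrow> complex mat" where
  "adj A = transpose_mat (map_mat cnj A)"

definition tau_z :: "nat \<Rightarrow> complex mat" where
  "tau_z N = four_block_mat (1\<^sub>m N) (0\<^sub>m N N) (0\<^sub>m N N) (- 1\<^sub>m N)"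

text \<open>sigma_x swaps particle and hole blocks: phi_{-k} = sigma_x (phi_k^dagger)^T.\<close>
definition sigma_x :: "nat \<Rightarrow> complex mat" where
  "sigma_x N = four_block_mat (0\<^sub>m N N) (1\<^sub>m N) (1\<^sub>m N) (0\<^sub>m N N)"

text \<open>The R x 2N coefficient matrix W(k) = [u(k) v(k)], so that
  (A_{1,k},...,A_{R,k})^T = W(k) phi_k.\<close>
definition nambu_coeff :: "nat \<Rightarrow> ('k \<Rightarrow> complex mat) \<Rightarrow> ('k \<Rightarrow> complex mat) \<Rightarrow> 'k \<Rightarrow> complex mat" where
  "nambu_coeff N u v k = four_block_mat (u k) (v k) (0\<^sub>m 0 N) (0\<^sub>m 0 N)"

text \<open>With M(k) = W(k)^dagger W(k) one has H = sum_k phi_k^dagger M(k) phi_k, and, using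
  phi_k = sigma_x (phi_{-k}^dagger)^T and the bosonic commutation relations, up to an
  additive constant H = 1/2 sum_k phi_k^dagger h(k) phi_k with the (Hermitian,
  particle-hole symmetric) BdG matrix h(k) = M(k) + sigma_x M(-k)^T sigma_x.\<close>
definition bdg_h :: "nat \<Rightarrow> ('k::uminus \<Rightarrow> complex mat) \<Rightarrow> ('k \<Rightarrow> complex mat) \<Rightarrow> 'k \<Rightarrow> complex mat" where
  "bdg_h N u v k =
     (let M = (\<lambda>q. adj (nambu_coeff N u v q) * nambu_coeff N u v q)
      in M k + sigma_x N * transpose_mat (M (- k)) * sigma_x N)"

definition bdg_tilde :: "nat \<Rightarrow> ('k::uminus \<Rightarrow> complex mat) \<Rightarrow> 'k \<Rightarrow> complex mat" where
  "bdg_tilde N u k =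
     (let Q = (\<lambda>q. adj (u q) * u q)
      in four_block_mat (Q k) (0\<^sub>m N N) (0\<^sub>m N N) (transpose_mat (Q (- k))))"

end

theory Submission
  imports Defs
begin

(*
  Stack the coefficient rows of A_{m,k} and A\<^sup>\<dagger>_{m,-k} into the Bogoliubov matrix
  \<Psi>(k) = [[u(k), v(k)], [conj v(-k), conj u(-k)]].  The BdG matrix is its Gram matrix,
  h = \<Psi>\<^sup>\<dagger> \<Psi> = P + Q, with particle part P = W(k)\<^sup>\<dagger> W(k) and hole part
  Q = \<sigma>\<^sub>x P(-k)\<^sup>T \<sigma>\<^sub>x.  The two constraints on u and v say exactly that \<Psi> is
  pseudo-unitary, \<Psi> \<tau>\<^sub>z \<Psi>\<^sup>\<dagger> = \<tau>\<^sub>z, hence h \<tau>\<^sub>z h = \<Psi>\<^sup>\<dagger> \<tau>\<^sub>z \<Psi> = P - Q.  Conjugation by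
  \<tau>\<^sub>z flips the sign of the off-diagonal blocks, so the right-hand side keeps only the
  upper-left block u\<^sup>\<dagger> u of P and the lower-right block (u(-k)\<^sup>\<dagger> u(-k))\<^sup>T of Q.
*)

lemma add_uminus_eq_minus_mat: "(A :: 'a::ab_group_add mat) + - B = A - B"
  by (intro eq_matI) auto

lemma minus_four_block_mat:
  assumes "A1 \<in> carrier_mat nr1 nc1" "B1 \<in> carrier_mat nr1 nc2"
    "C1 \<in> carrier_mat nr2 nc1" "D1 \<in> carrier_mat nr2 nc2"
    "A2 \<in> carrier_mat nr1 nc1" "B2 \<in> carrier_mat nr1 nc2"
    "C2 \<in> carrier_mat nr2 nc1" "D2 \<in> carrier_mat nr2 nc2"
  shows "four_block_mat A1 B1 C1 D1 - four_block_mat A2 B2 C2 D2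
    = four_block_mat (A1 - A2) (B1 - B2) (C1 - C2) (D1 - D2)"
  using assms by (intro eq_matI) auto

lemma adj_carrier_mat [simp]: "A \<in> carrier_mat nr nc \<Longrightarrow> adj A \<in> carrier_mat nc nr"
  by (simp add: adj_def)

lemma dim_adj [simp]: "dim_row (adj A) = dim_col A" "dim_col (adj A) = dim_row A"
  by (simp_all add: adj_def)

lemma index_adj [simp]:
  "i < dim_col A \<Longrightarrow> j < dim_row A \<Longrightarrow> adj A $$ (i, j) = cnj (A $$ (j, i))"
  by (simp add: adj_def)

lemma adj_map_mat_cnj [simp]: "adj (map_mat cnj A) = transpose_mat A"
  by (intro eq_matI) auto

(* The simplifier cannot apply mult_carrier_mat to these products, since it would have to
   guess the inner dimension n of adj A or transpose A; here n is read off a hypothesis. *)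

lemma adj_mult_carrier_mat [simp]:
  "A \<in> carrier_mat n nr \<Longrightarrow> B \<in> carrier_mat n nc \<Longrightarrow> adj A * B \<in> carrier_mat nr nc"
  by (metis adj_carrier_mat mult_carrier_mat)

lemma transpose_mult_cnj_carrier_mat [simp]:
  "A \<in> carrier_mat n nr \<Longrightarrow> B \<in> carrier_mat n nc \<Longrightarrow>
   transpose_mat A * map_mat cnj B \<in> carrier_mat nr nc"
  by (metis map_carrier_mat mult_carrier_mat transpose_carrier_mat)

lemma adj_four_block_mat:
  assumes "A \<in> carrier_mat nr1 nc1" "B \<in> carrier_mat nr1 nc2"
    "C \<in> carrier_mat nr2 nc1" "D \<in> carrier_mat nr2 nc2"
  shows "adj (four_block_mat A B C D) = four_block_mat (adj A) (adj C) (adj B) (adj D)"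
  using assms by (intro eq_matI) auto

lemma transpose_adj_mult:
  "A \<in> carrier_mat n nr \<Longrightarrow> B \<in> carrier_mat n nc \<Longrightarrow>
   transpose_mat (adj A * B) = transpose_mat B * map_mat cnj A"
  by (intro eq_matI) (auto simp: scalar_prod_def mult.commute)

lemma adj_mult_self_sandwich:
  assumes \<Psi>: "\<Psi> \<in> carrier_mat r n" and T: "T \<in> carrier_mat n n"
    and "\<Psi> * T * adj \<Psi> = T'"
  shows "adj \<Psi> * \<Psi> * T * (adj \<Psi> * \<Psi>) = adj \<Psi> * T' * \<Psi>"
proof -
  have adj: "adj \<Psi> \<in> carrier_mat n r" and \<Psi>T: "\<Psi> * T \<in> carrier_mat r n"
    using \<Psi> T by auto
  have "adj \<Psi> * \<Psi> * T * (adj \<Psi> * \<Psi>) = adj \<Psi> * (\<Psi> * T) * (adj \<Psi> * \<Psi>)"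
    by (simp only: assoc_mult_mat[OF adj \<Psi> T])
  also have "\<dots> = adj \<Psi> * (\<Psi> * T) * adj \<Psi> * \<Psi>"
    by (rule assoc_mult_mat[OF mult_carrier_mat[OF adj \<Psi>T] adj \<Psi>, symmetric])
  also have "\<dots> = adj \<Psi> * (\<Psi> * T * adj \<Psi>) * \<Psi>"
    by (simp only: assoc_mult_mat[OF adj \<Psi>T adj])
  finally show ?thesis
    using assms(3) by simp
qed

lemma tau_z_carrier_mat [simp]: "tau_z N \<in> carrier_mat (N + N) (N + N)"
  by (simp add: tau_z_def)

lemma tau_z_mult_four_block_mat:
  assumes "A \<in> carrier_mat N nc1" "B \<in> carrier_mat N nc2"
    "C \<in> carrier_mat N nc1" "D \<in> carrier_mat N nc2"
  shows "tau_z N * four_block_mat A B C D = four_block_mat A B (- C) (- D)"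
  using assms unfolding tau_z_def
  by (simp add: mult_four_block_mat[where ?nr1.0=N and ?n1.0=N and ?n2.0=N and ?nr2.0=N and ?nc1.0=nc1 and ?nc2.0=nc2])

lemma four_block_mat_mult_tau_z:
  assumes "A \<in> carrier_mat nr1 N" "B \<in> carrier_mat nr1 N"
    "C \<in> carrier_mat nr2 N" "D \<in> carrier_mat nr2 N"
  shows "four_block_mat A B C D * tau_z N = four_block_mat A (- B) C (- D)"
  using assms unfolding tau_z_def
  by (simp add: mult_four_block_mat[where ?nr1.0=nr1 and ?n1.0=N and ?n2.0=N and ?nr2.0=nr2 and ?nc1.0=N and ?nc2.0=N])

lemma sigma_x_sandwich_four_block_mat:
  assumes "A \<in> carrier_mat N N" "B \<in> carrier_mat N N" "C \<in> carrier_mat N N" "D \<in> carrier_mat N N"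
  shows "sigma_x N * four_block_mat A B C D * sigma_x N = four_block_mat D C B A"
  using assms unfolding sigma_x_def
  by (simp add: mult_four_block_mat[where ?nr1.0=N and ?n1.0=N and ?n2.0=N and ?nr2.0=N and ?nc1.0=N and ?nc2.0=N])

lemma tau_z_flatten_particle_hole:
  assumes blocks: "P\<^sub>1\<^sub>1 \<in> carrier_mat N N" "P\<^sub>1\<^sub>2 \<in> carrier_mat N N" "P\<^sub>2\<^sub>1 \<in> carrier_mat N N" "P\<^sub>2\<^sub>2 \<in> carrier_mat N N"
    "Q\<^sub>1\<^sub>1 \<in> carrier_mat N N" "Q\<^sub>1\<^sub>2 \<in> carrier_mat N N" "Q\<^sub>2\<^sub>1 \<in> carrier_mat N N" "Q\<^sub>2\<^sub>2 \<in> carrier_mat N N"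
    and P: "P = four_block_mat P\<^sub>1\<^sub>1 P\<^sub>1\<^sub>2 P\<^sub>2\<^sub>1 P\<^sub>2\<^sub>2"
    and Q: "Q = four_block_mat Q\<^sub>1\<^sub>1 Q\<^sub>1\<^sub>2 Q\<^sub>2\<^sub>1 Q\<^sub>2\<^sub>2"
    and h: "h = P + Q" and h_tau_z_h: "h * tau_z N * h = P - Q"
  shows "(1/4) \<cdot>\<^sub>m (h + tau_z N * h * tau_z N + tau_z N * h * tau_z N * h + h * tau_z N * h * tau_z N)
    = four_block_mat P\<^sub>1\<^sub>1 (0\<^sub>m N N) (0\<^sub>m N N) Q\<^sub>2\<^sub>2"
proof -
  let ?\<tau> = "tau_z N"
  have h_blocks: "h = four_block_mat (P\<^sub>1\<^sub>1 + Q\<^sub>1\<^sub>1) (P\<^sub>1\<^sub>2 + Q\<^sub>1\<^sub>2) (P\<^sub>2\<^sub>1 + Q\<^sub>2\<^sub>1) (P\<^sub>2\<^sub>2 + Q\<^sub>2\<^sub>2)"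
    unfolding h P Q using blocks by (intro eq_matI) auto
  have h_tau_z_h_blocks:
    "h * ?\<tau> * h = four_block_mat (P\<^sub>1\<^sub>1 - Q\<^sub>1\<^sub>1) (P\<^sub>1\<^sub>2 - Q\<^sub>1\<^sub>2) (P\<^sub>2\<^sub>1 - Q\<^sub>2\<^sub>1) (P\<^sub>2\<^sub>2 - Q\<^sub>2\<^sub>2)"
    unfolding h_tau_z_h P Q using blocks by (intro eq_matI) auto
  have "h \<in> carrier_mat (N + N) (N + N)"
    using h_blocks blocks by simp
  then have "?\<tau> * h * ?\<tau> * h = ?\<tau> * (h * ?\<tau> * h)"
    by (simp add: assoc_mult_mat[of _ "N + N" "N + N" _ "N + N" _ "N + N"])
  then have "?\<tau> * h * ?\<tau> * h =
      four_block_mat (P\<^sub>1\<^sub>1 - Q\<^sub>1\<^sub>1) (P\<^sub>1\<^sub>2 - Q\<^sub>1\<^sub>2) (- (P\<^sub>2\<^sub>1 - Q\<^sub>2\<^sub>1)) (- (P\<^sub>2\<^sub>2 - Q\<^sub>2\<^sub>2))"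
    using h_tau_z_h_blocks blocks
    by (simp add: minus_carrier_mat tau_z_mult_four_block_mat[where ?nc1.0=N and ?nc2.0=N])
  moreover have "h * ?\<tau> * h * ?\<tau> =
      four_block_mat (P\<^sub>1\<^sub>1 - Q\<^sub>1\<^sub>1) (- (P\<^sub>1\<^sub>2 - Q\<^sub>1\<^sub>2)) (P\<^sub>2\<^sub>1 - Q\<^sub>2\<^sub>1) (- (P\<^sub>2\<^sub>2 - Q\<^sub>2\<^sub>2))"
    using h_tau_z_h_blocks blocks
    by (simp add: minus_carrier_mat four_block_mat_mult_tau_z[where ?nr1.0=N and ?nr2.0=N])
  moreover have "?\<tau> * h * ?\<tau> =
      four_block_mat (P\<^sub>1\<^sub>1 + Q\<^sub>1\<^sub>1) (- (P\<^sub>1\<^sub>2 + Q\<^sub>1\<^sub>2)) (- (P\<^sub>2\<^sub>1 + Q\<^sub>2\<^sub>1)) (P\<^sub>2\<^sub>2 + Q\<^sub>2\<^sub>2)"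
    using h_blocks blocks
    by (simp add: tau_z_mult_four_block_mat[where ?nc1.0=N and ?nc2.0=N]
        four_block_mat_mult_tau_z[where ?nr1.0=N and ?nr2.0=N])
  ultimately show ?thesis
    using h_blocks blocks by (intro eq_matI) (auto simp: field_simps)
qed

definition bdg_particle :: "nat \<Rightarrow> ('k \<Rightarrow> complex mat) \<Rightarrow> ('k \<Rightarrow> complex mat) \<Rightarrow> 'k \<Rightarrow> complex mat" where
  "bdg_particle N u v k = adj (nambu_coeff N u v k) * nambu_coeff N u v k"

definition bdg_hole :: "nat \<Rightarrow> ('k::uminus \<Rightarrow> complex mat) \<Rightarrow> ('k \<Rightarrow> complex mat) \<Rightarrow> 'k \<Rightarrow> complex mat" where
  "bdg_hole N u v k = sigma_x N * transpose_mat (bdg_particle N u v (- k)) * sigma_x N"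

lemma bdg_h_eq_particle_plus_hole: "bdg_h N u v k = bdg_particle N u v k + bdg_hole N u v k"
  by (simp add: bdg_h_def bdg_particle_def bdg_hole_def Let_def)

lemma bdg_particle_four_block_mat:
  assumes "u k \<in> carrier_mat R N" "v k \<in> carrier_mat R N"
  shows "bdg_particle N u v k =
    four_block_mat (adj (u k) * u k) (adj (u k) * v k) (adj (v k) * u k) (adj (v k) * v k)"
proof -
  have "adj (nambu_coeff N u v k) = four_block_mat (adj (u k)) (0\<^sub>m N 0) (adj (v k)) (0\<^sub>m N 0)"
    unfolding nambu_coeff_def using assms by (subst adj_four_block_mat[where ?nr2.0=0]) auto
  then show ?thesis
    unfolding bdg_particle_def nambu_coeff_def using assms
    by (simp add: mult_four_block_mat[where ?nr1.0=N and ?n1.0=R and ?n2.0=0 and ?nr2.0=N and ?nc1.0=N and ?nc2.0=N])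
qed

lemma bdg_hole_four_block_mat:
  assumes u: "u (- k) \<in> carrier_mat R N" and v: "v (- k) \<in> carrier_mat R N"
  shows "bdg_hole N u v k =
    four_block_mat
      (transpose_mat (v (- k)) * map_mat cnj (v (- k))) (transpose_mat (v (- k)) * map_mat cnj (u (- k)))
      (transpose_mat (u (- k)) * map_mat cnj (v (- k))) (transpose_mat (u (- k)) * map_mat cnj (u (- k)))"
  unfolding bdg_hole_def using bdg_particle_four_block_mat[of u "- k" R N v, OF u v] u v
  by (simp add: transpose_four_block_mat[where ?nr1.0=N and ?nc1.0=N and ?nr2.0=N and ?nc2.0=N]
      sigma_x_sandwich_four_block_mat transpose_adj_mult)

lemma adj_pairing_eq_zero:
  fixes u u' v v' :: "complex mat"
  assumes c: "u \<in> carrier_mat R N" "v \<in> carrier_mat R N" "u' \<in> carrier_mat R N" "v' \<in> carrier_mat R N"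
    and pairing: "u * transpose_mat v' - v * transpose_mat u' = 0\<^sub>m R R"
  shows "map_mat cnj v' * adj u - map_mat cnj u' * adj v = 0\<^sub>m R R"
proof (rule eq_matI)
  fix i j assume ij: "i < dim_row (0\<^sub>m R R :: complex mat)" "j < dim_col (0\<^sub>m R R :: complex mat)"
  have "(map_mat cnj v' * adj u - map_mat cnj u' * adj v) $$ (i, j)
      = cnj ((u * transpose_mat v' - v * transpose_mat u') $$ (j, i))"
    using c ij by (simp add: scalar_prod_def mult.commute)
  then show "(map_mat cnj v' * adj u - map_mat cnj u' * adj v) $$ (i, j) = 0\<^sub>m R R $$ (i, j)"
    using pairing ij c[THEN carrier_matD(1)] by simp
qed (use c[THEN carrier_matD(1)] in auto)

lemma cnj_normalization:
  fixes u v :: "complex mat"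
  assumes c: "u \<in> carrier_mat R N" "v \<in> carrier_mat R N"
    and norm: "u * adj u - v * adj v = 1\<^sub>m R"
  shows "map_mat cnj v * transpose_mat v - map_mat cnj u * transpose_mat u = - 1\<^sub>m R"
proof (rule eq_matI)
  fix i j assume ij: "i < dim_row (- 1\<^sub>m R :: complex mat)" "j < dim_col (- 1\<^sub>m R :: complex mat)"
  have "(map_mat cnj v * transpose_mat v - map_mat cnj u * transpose_mat u) $$ (i, j)
      = - (u * adj u - v * adj v) $$ (j, i)"
    using c ij by (simp add: scalar_prod_def mult.commute)
  then show "(map_mat cnj v * transpose_mat v - map_mat cnj u * transpose_mat u) $$ (i, j) = (- 1\<^sub>m R) $$ (i, j)"
    using norm ij c[THEN carrier_matD(1)] by auto
qed (use c[THEN carrier_matD(1)] in auto)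

(* Row m of the upper half holds the coefficients of A_{m,k}, row m of the lower half those
   of A\<^sup>\<dagger>_{m,-k}, both with respect to the Nambu vector \<phi>_k. *)

definition bogoliubov_mat :: "('k::uminus \<Rightarrow> complex mat) \<Rightarrow> ('k \<Rightarrow> complex mat) \<Rightarrow> 'k \<Rightarrow> complex mat" where
  "bogoliubov_mat u v k =
     four_block_mat (u k) (v k) (map_mat cnj (v (- k))) (map_mat cnj (u (- k)))"

context
  fixes u v :: "'k::uminus \<Rightarrow> complex mat" and R N :: nat and k :: 'k
  assumes u: "u k \<in> carrier_mat R N" and v: "v k \<in> carrier_mat R N"
    and u': "u (- k) \<in> carrier_mat R N" and v': "v (- k) \<in> carrier_mat R N"
begin

lemma bogoliubov_mat_carrier: "bogoliubov_mat u v k \<in> carrier_mat (R + R) (N + N)"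
  using u v u' v' by (simp add: bogoliubov_mat_def)

lemma adj_bogoliubov_mat:
  "adj (bogoliubov_mat u v k) =
    four_block_mat (adj (u k)) (transpose_mat (v (- k))) (adj (v k)) (transpose_mat (u (- k)))"
  unfolding bogoliubov_mat_def using u v u' v'
  by (simp add: adj_four_block_mat[where ?nr1.0=R and ?nc1.0=N and ?nr2.0=R and ?nc2.0=N])

lemma adj_bogoliubov_mult_bogoliubov:
  "adj (bogoliubov_mat u v k) * bogoliubov_mat u v k = bdg_particle N u v k + bdg_hole N u v k"
  unfolding adj_bogoliubov_mat unfolding bogoliubov_mat_def using u v u' v'
  by (simp add: bdg_particle_four_block_mat[of u k R N v, OF u v] bdg_hole_four_block_mat[of u k R N v, OF u' v']
      mult_four_block_mat[where ?nr1.0=N and ?n1.0=R and ?n2.0=R and ?nr2.0=N and ?nc1.0=N and ?nc2.0=N]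
      add_four_block_mat[where ?nr1.0=N and ?nc1.0=N and ?nr2.0=N and ?nc2.0=N])

lemma adj_bogoliubov_tau_z_bogoliubov:
  "adj (bogoliubov_mat u v k) * tau_z R * bogoliubov_mat u v k = bdg_particle N u v k - bdg_hole N u v k"
proof -
  have assoc: "adj (bogoliubov_mat u v k) * tau_z R * bogoliubov_mat u v k
      = adj (bogoliubov_mat u v k) * (tau_z R * bogoliubov_mat u v k)"
    using bogoliubov_mat_carrier by (intro assoc_mult_mat[OF adj_carrier_mat tau_z_carrier_mat])
  have tau_z_bogoliubov: "tau_z R * bogoliubov_mat u v k =
      four_block_mat (u k) (v k) (- map_mat cnj (v (- k))) (- map_mat cnj (u (- k)))"
    unfolding bogoliubov_mat_def using u v u' v' by (simp add: tau_z_mult_four_block_mat)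
  show ?thesis
    unfolding assoc tau_z_bogoliubov unfolding adj_bogoliubov_mat using u v u' v'
    by (simp add: bdg_particle_four_block_mat[of u k R N v, OF u v] bdg_hole_four_block_mat[of u k R N v, OF u' v']
      mult_four_block_mat[where ?nr1.0=N and ?n1.0=R and ?n2.0=R and ?nr2.0=N and ?nc1.0=N and ?nc2.0=N]
      minus_four_block_mat[where ?nr1.0=N and ?nc1.0=N and ?nr2.0=N and ?nc2.0=N] add_uminus_eq_minus_mat)
qed

lemma bogoliubov_mat_pseudo_unitary:
  assumes norm: "u k * adj (u k) - v k * adj (v k) = 1\<^sub>m R"
    and norm': "u (- k) * adj (u (- k)) - v (- k) * adj (v (- k)) = 1\<^sub>m R"
    and pairing: "u k * transpose_mat (v (- k)) - v k * transpose_mat (u (- k)) = 0\<^sub>m R R"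
  shows "bogoliubov_mat u v k * tau_z N * adj (bogoliubov_mat u v k) = tau_z R"
proof -
  note dims = u v u' v' [THEN carrier_matD(1)] u v u' v' [THEN carrier_matD(2)]
  have "bogoliubov_mat u v k * tau_z N =
      four_block_mat (u k) (- v k) (map_mat cnj (v (- k))) (- map_mat cnj (u (- k)))"
    unfolding bogoliubov_mat_def using u v u' v' by (simp add: four_block_mat_mult_tau_z)
  then show ?thesis
    unfolding adj_bogoliubov_mat using u v u' v' dims norm pairing
      adj_pairing_eq_zero[OF u v u' v' pairing] cnj_normalization[OF u' v' norm']
    by (simp add: tau_z_def add_uminus_eq_minus_mat
        mult_four_block_mat[where ?nr1.0=R and ?n1.0=N and ?n2.0=N and ?nr2.0=R and ?nc1.0=R and ?nc2.0=R])
qed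

end

theorem mainTheorem3:
  fixes N R :: nat
    and u v :: "'k::ab_group_add \<Rightarrow> complex mat"
    and k :: "'k"
  assumes "N \<ge> 1" and "R \<le> N"
    and "\<And>q. u q \<in> carrier_mat R N"
    and "\<And>q. v q \<in> carrier_mat R N"
    and "\<And>q. u q * adj (u q) - v q * adj (v q) = 1\<^sub>m R"
    and "\<And>q. u q * transpose_mat (v (- q)) - v q * transpose_mat (u (- q)) = 0\<^sub>m R R"
  shows "bdg_tilde N u k =
           (1/4 :: complex) \<cdot>\<^sub>m
             (bdg_h N u v k
              + tau_z N * bdg_h N u v k * tau_z N
              + tau_z N * bdg_h N u v k * tau_z N * bdg_h N u v k
              + bdg_h N u v k * tau_z N * bdg_h N u v k * tau_z N)"
proof -
  note carriers = assms(3)[of k] assms(4)[of k] assms(3)[of "- k"] assms(4)[of "- k"]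
  let ?\<Psi> = "bogoliubov_mat u v k" and ?h = "bdg_h N u v k"
  have h: "?h = bdg_particle N u v k + bdg_hole N u v k"
    by (rule bdg_h_eq_particle_plus_hole)
  have "?h * tau_z N * ?h = adj ?\<Psi> * tau_z R * ?\<Psi>"
    using adj_mult_self_sandwich[OF bogoliubov_mat_carrier[OF carriers] tau_z_carrier_mat
        bogoliubov_mat_pseudo_unitary[OF carriers assms(5)[of k] assms(5)[of "- k"] assms(6)[of k]]]
    by (simp add: h adj_bogoliubov_mult_bogoliubov[OF carriers])
  also have "\<dots> = bdg_particle N u v k - bdg_hole N u v k"
    by (rule adj_bogoliubov_tau_z_bogoliubov[OF carriers])
  finally have h_tau_z_h: "?h * tau_z N * ?h = bdg_particle N u v k - bdg_hole N u v k" .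
  have "(1/4 :: complex) \<cdot>\<^sub>m (?h + tau_z N * ?h * tau_z N + tau_z N * ?h * tau_z N * ?h + ?h * tau_z N * ?h * tau_z N)
      = four_block_mat (adj (u k) * u k) (0\<^sub>m N N) (0\<^sub>m N N) (transpose_mat (u (- k)) * map_mat cnj (u (- k)))"
    by (rule tau_z_flatten_particle_hole[OF _ _ _ _ _ _ _ _
          bdg_particle_four_block_mat[of u k R N v, OF carriers(1,2)]
          bdg_hole_four_block_mat[of u k R N v, OF carriers(3,4)] h h_tau_z_h])
      (use carriers in simp_all)
  then show ?thesis
    unfolding bdg_tilde_def Let_def using carriers by (simp add: transpose_adj_mult)
qed

end
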